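(* Let $\langle X,d\rangle$ be a metric space. The following are equivalent: (1) $X$ is cofinally Bourbaki quasi-complete; (2) every continuous function $f$ from $X$ to any metric space $\langle Y,\rho\rangle$ maps every cofinally Bourbaki quasi-Cauchy sequence in $X$ to a sequence in $Y$ that has a Cauchy subsequence; (3) every continuous function from $X$ to any metric space $\langle Y,\rho\rangle$ maps every cofinally Bourbaki quasi-Cauchy sequence in $X$ to a cofinally Cauchy sequence in $Y$; (4) every continuous function from $X$ to any metric space $\langle Y,\rho\rangle$ maps every cofinally Bourbaki quasi-Cauchy sequence in $X$ to a cofinally Bourbaki-Cauchy sequence in $Y$; (5) every real-valued continuous function on $X$ maps every cofinally Bourbaki quasi-Cauchy sequence in $X$ to a cofinally Bourbaki-Cauchy sequence in $\mathbb{R}$.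
   Context: For $\varepsilon>0$, an $\varepsilon$-chain joining $x,y$ is a finite sequence $x=x_0,\dots,x_n=y$ with $d(x_{i-1},x_i)<\varepsilon$. A sequence $\langle x_n\rangle$ in $X$ is cofinally Bourbaki quasi-Cauchy if for every $\varepsilon>0$ there is an infinite $N_\varepsilon\subseteq\mathbb{N}$ such that any $x_j,x_k$ with $j,k\in N_\varepsilon$ can be joined by an $\varepsilon$-chain; $X$ is cofinally Bourbaki quasi-complete if every such sequence has a cluster point. A sequence $\langle y_n\rangle$ in $\langle Y,\rho\rangle$ is cofinally Cauchy if for every $\varepsilon>0$ there is an infinite $N_\varepsilon\subseteq\mathbb{N}$ with $\rho(y_n,y_m)<\varepsilon$ for all $n,m\in N_\varepsilon$. Let $S^1_\rho(p,\varepsilon)$ be the open $\varepsilon$-ball about $p$ and $S^{m}_\rho(p,\varepsilon)=\{y:\rho(y,S^{m-1}_\rho(p,\varepsilon))<\varepsilon\}$; $\langle y_n\rangle$ is cofinally Bourbaki-Cauchy if for every $\varepsilon>0$ there exist an infinite $N_\varepsilon\subseteq\mathbb{N}$, $m\in\mathbb{N}$, $p\in Y$ with $y_n\in S^m_\rho(p,\varepsilon)$ for all $n\in N_\varepsilon$. *)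

theory Defs
  imports "HOL-Analysis.Analysis"
begin

text \<open>The metric space X is a set S in a type of class metric_space (subspace metric).
  An e-chain in S joining x and y: a finite list in S starting at x, ending at y,
  with consecutive distances < e.\<close>
definition eps_chain_joins :: "'a::metric_space set \<Rightarrow> real \<Rightarrow> 'a \<Rightarrow> 'a \<Rightarrow> bool" where
  "eps_chain_joins S e x y \<longleftrightarrow>
     (\<exists>xs. xs \<noteq> [] \<and> hd xs = x \<and> last xs = y \<and> set xs \<subseteq> S \<and>
        (\<forall>i. Suc i < length xs \<longrightarrow> dist (xs ! i) (xs ! Suc i) < e))"

definition cofinally_bourbaki_quasi_cauchy :: "'a::metric_space set \<Rightarrow> (nat \<Rightarrow> 'a) \<Rightarrow> bool" where
  "cofinally_bourbaki_quasi_cauchy S x \<longleftrightarrow>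
     (\<forall>n. x n \<in> S) \<and>
     (\<forall>e>0. \<exists>N::nat set. infinite N \<and> (\<forall>j\<in>N. \<forall>k\<in>N. eps_chain_joins S e (x j) (x k)))"

definition cluster_point_in :: "'a::metric_space set \<Rightarrow> (nat \<Rightarrow> 'a) \<Rightarrow> 'a \<Rightarrow> bool" where
  "cluster_point_in S x p \<longleftrightarrow> p \<in> S \<and> (\<forall>e>0. \<forall>n. \<exists>m\<ge>n. dist (x m) p < e)"

definition cofinally_bourbaki_quasi_complete :: "'a::metric_space set \<Rightarrow> bool" where
  "cofinally_bourbaki_quasi_complete S \<longleftrightarrow>
     (\<forall>x. cofinally_bourbaki_quasi_cauchy S x \<longrightarrow> (\<exists>p. cluster_point_in S x p))"

definition cofinally_cauchy :: "(nat \<Rightarrow> 'b::metric_space) \<Rightarrow> bool" where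
  "cofinally_cauchy y \<longleftrightarrow>
     (\<forall>e>0. \<exists>N::nat set. infinite N \<and> (\<forall>n\<in>N. \<forall>m\<in>N. dist (y n) (y m) < e))"

text \<open>Bourbaki balls S^m(p,e), m \<ge> 1 (index 0 is unused and set to the empty set).\<close>
fun bourbaki_ball :: "nat \<Rightarrow> 'b::metric_space \<Rightarrow> real \<Rightarrow> 'b set" where
  "bourbaki_ball 0 p e = {}"
| "bourbaki_ball (Suc 0) p e = ball p e"
| "bourbaki_ball (Suc (Suc m)) p e = {y. infdist y (bourbaki_ball (Suc m) p e) < e}"

definition cofinally_bourbaki_cauchy :: "(nat \<Rightarrow> 'b::metric_space) \<Rightarrow> bool" where
  "cofinally_bourbaki_cauchy y \<longleftrightarrow>
     (\<forall>e>0. \<exists>N::nat set. \<exists>m\<ge>1. \<exists>p. infinite N \<and> (\<forall>n\<in>N. y n \<in> bourbaki_ball m p e))"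

definition has_cauchy_subseq :: "(nat \<Rightarrow> 'b::metric_space) \<Rightarrow> bool" where
  "has_cauchy_subseq y \<longleftrightarrow> (\<exists>r. strict_mono r \<and> Cauchy (y \<circ> r))"

end

theory Submission
  imports Defs
begin

(* If X is cofinally Bourbaki quasi-complete, a cofinally Bourbaki quasi-Cauchy sequence has a
   cluster point p, so some subsequence converges to p and its image under a continuous f
   converges to f p. For arbitrary sequences, having a Cauchy subsequence implies being
   cofinally Cauchy, which implies being cofinally Bourbaki-Cauchy, and the latter forces
   boundedness along infinitely many indices because S^m(p,e) lies in the ball of radius m e.
   Conversely, if a sequence in X has no cluster point, its range is closed and discrete in X
   and every value is taken only finitely often; sending each value to the largest index at
   which it is taken is then continuous on the range, and a Tietze extension gives a continuous
   real f with f (x n) >= n, which is bounded along no infinite set of indices. *)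

lemma range_subset_if_cofinally_bourbaki_quasi_cauchy:
  "cofinally_bourbaki_quasi_cauchy S x \<Longrightarrow> range x \<subseteq> S"
  unfolding cofinally_bourbaki_quasi_cauchy_def by blast

lemma centre_in_bourbaki_ball: "e > 0 \<Longrightarrow> p \<in> bourbaki_ball (Suc m) p e"
  by (induction m) simp_all

lemma infdist_lessE:
  assumes "infdist x A < e" "A \<noteq> {}"
  obtains a where "a \<in> A" "dist x a < e"
proof -
  have "(INF a\<in>A. dist x a) < e"
    using assms by (simp add: infdist_notempty)
  then show ?thesis
    using assms(2) that by (subst (asm) cINF_less_iff) (auto intro: bdd_belowI2[where m=0])
qed

lemma bourbaki_ball_subset_ball: "e > 0 \<Longrightarrow> bourbaki_ball m p e \<subseteq> ball p (real m * e)"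
proof (induction m p e rule: bourbaki_ball.induct)
  case (3 m p e)
  show ?case
  proof
    fix y assume "y \<in> bourbaki_ball (Suc (Suc m)) p e"
    then have "infdist y (bourbaki_ball (Suc m) p e) < e"
      by simp
    then obtain a where a: "a \<in> bourbaki_ball (Suc m) p e" "dist y a < e"
      using centre_in_bourbaki_ball[OF "3.prems", of p m] infdist_lessE by blast
    then have "dist p a < real (Suc m) * e"
      using "3.IH"[OF "3.prems"] by auto
    with a(2) show "y \<in> ball p (real (Suc (Suc m)) * e)"
      using dist_triangle[of p y a] by (simp add: dist_commute algebra_simps)
  qed
qed auto

lemma cofinally_bourbaki_cauchy_imp_bounded_on_infinite:
  assumes "cofinally_bourbaki_cauchy y"
  obtains N where "infinite N" "bounded (y ` N)"
proof -
  obtain N m p where "infinite N" "\<forall>n\<in>N. y n \<in> bourbaki_ball m p 1"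
    using assms unfolding cofinally_bourbaki_cauchy_def by (meson zero_less_one)
  moreover have "y ` N \<subseteq> ball p (real m)"
    using calculation(2) bourbaki_ball_subset_ball[of 1 m p] by auto
  ultimately show ?thesis
    using that bounded_subset_ballI by blast
qed

lemma has_cauchy_subseq_imp_cofinally_cauchy:
  assumes "has_cauchy_subseq y"
  shows "cofinally_cauchy y"
  unfolding cofinally_cauchy_def
proof (intro allI impI)
  fix e :: real assume "e > 0"
  obtain r where r: "strict_mono r" "Cauchy (y \<circ> r)"
    using assms unfolding has_cauchy_subseq_def by blast
  then obtain M where M: "\<forall>i\<ge>M. \<forall>j\<ge>M. dist (y (r i)) (y (r j)) < e"
    using \<open>e > 0\<close> unfolding Cauchy_def by auto
  have "infinite (r ` {M..})"
    using strict_mono_imp_inj_on[OF r(1)]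
    by (meson finite_imageD infinite_Ici inj_on_subset subset_UNIV)
  moreover have "\<forall>n\<in>r ` {M..}. \<forall>m\<in>r ` {M..}. dist (y n) (y m) < e"
    using M by auto
  ultimately show "\<exists>N. infinite N \<and> (\<forall>n\<in>N. \<forall>m\<in>N. dist (y n) (y m) < e)"
    by blast
qed

lemma cofinally_cauchy_imp_cofinally_bourbaki_cauchy:
  assumes "cofinally_cauchy y"
  shows "cofinally_bourbaki_cauchy y"
  unfolding cofinally_bourbaki_cauchy_def
proof (intro allI impI)
  fix e :: real assume "e > 0"
  then obtain N where N: "infinite N" "\<forall>n\<in>N. \<forall>m\<in>N. dist (y n) (y m) < e"
    using assms unfolding cofinally_cauchy_def by blast
  then obtain k where "k \<in> N"
    by (metis finite.emptyI ex_in_conv)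
  then have "\<forall>n\<in>N. y n \<in> bourbaki_ball 1 (y k) e"
    using N(2) by (simp add: dist_commute)
  then show "\<exists>N. \<exists>m\<ge>1. \<exists>p. infinite N \<and> (\<forall>n\<in>N. y n \<in> bourbaki_ball m p e)"
    using N(1) by blast
qed

lemma cluster_point_inI_infinite:
  assumes "p \<in> S" "\<And>e. e > 0 \<Longrightarrow> infinite {n. dist (x n) p < e}"
  shows "cluster_point_in S x p"
  using assms unfolding cluster_point_in_def infinite_nat_iff_unbounded_le by auto

lemma cluster_point_in_imp_convergent_subseq:
  assumes "cluster_point_in S x p"
  obtains r where "strict_mono r" "(x \<circ> r) \<longlonglongrightarrow> p"
proof -
  have close: "\<exists>m>n. dist (x m) p < 1 / real (Suc k)" for n k
    using assms unfolding cluster_point_in_def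
    by (meson Suc_le_eq of_nat_0_less_iff zero_less_Suc zero_less_divide_1_iff)
  have "\<exists>r. \<forall>k. dist (x (r k)) p < 1 / real (Suc k) \<and> r k < r (Suc k)"
  proof (rule dependent_nat_choice)
    show "\<exists>m. dist (x m) p < 1 / real (Suc 0)"
      using close[of 0 0] by blast
    show "\<exists>m. dist (x m) p < 1 / real (Suc (Suc k)) \<and> n < m" for n k
      using close[of n "Suc k"] by blast
  qed
  then obtain r where r: "\<And>k. dist (x (r k)) p < 1 / real (Suc k)" "\<And>k. r k < r (Suc k)"
    by blast
  have "(\<lambda>k. dist (x (r k)) p) \<longlonglongrightarrow> 0"
  proof (rule LIMSEQ_norm_0)
    show "norm (dist (x (r k)) p) < 1 / real (Suc k)" for k
      using r(1)[of k] by simp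
  qed
  then have "(x \<circ> r) \<longlonglongrightarrow> p"
    by (subst tendsto_dist_iff) (simp add: o_def)
  then show ?thesis
    using that r(2) strict_mono_Suc_iff by blast
qed

lemma has_cauchy_subseq_continuous_image:
  assumes "cluster_point_in S x p" "range x \<subseteq> S" "continuous_on S f"
  shows "has_cauchy_subseq (f \<circ> x)"
proof -
  obtain r where r: "strict_mono r" "(x \<circ> r) \<longlonglongrightarrow> p"
    using assms(1) by (rule cluster_point_in_imp_convergent_subseq)
  have "p \<in> S"
    using assms(1) unfolding cluster_point_in_def by blast
  then have "((f \<circ> x) \<circ> r) \<longlonglongrightarrow> f p"
    using continuous_on_tendsto_compose[OF assms(3) r(2)] assms(2)
    by (simp add: o_def image_subset_iff)
  then show ?thesis
    unfolding has_cauchy_subseq_def using r(1) LIMSEQ_imp_Cauchy by blast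
qed

lemma islimpt_range_imp_cluster_point_in:
  assumes "p \<in> S" "p islimpt range x"
  shows "cluster_point_in S x p"
proof (rule cluster_point_inI_infinite[OF assms(1)])
  fix e :: real assume "e > 0"
  then have "infinite (range x \<inter> ball p e)"
    using assms(2) islimpt_eq_infinite_ball by blast
  moreover have "range x \<inter> ball p e \<subseteq> x ` {n. dist (x n) p < e}"
    by (auto simp: dist_commute)
  ultimately show "infinite {n. dist (x n) p < e}"
    using finite_subset by blast
qed

lemma finite_fibres_if_no_cluster_point_in:
  assumes "range x \<subseteq> S" "\<And>p. \<not> cluster_point_in S x p"
  shows "finite {n. x n = y}"
proof (rule ccontr)
  assume infinite: "infinite {n. x n = y}"
  then obtain k where "x k = y"
    using not_finite_existsD by blast
  then have "y \<in> S"
    using assms(1) by auto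
  moreover have "infinite {n. dist (x n) y < e}" if "e > 0" for e :: real
  proof (rule infinite_super[OF _ infinite])
    show "{n. x n = y} \<subseteq> {n. dist (x n) y < e}"
      using that by auto
  qed
  ultimately show False
    using assms(2) cluster_point_inI_infinite by blast
qed

lemma Tietze_extension_real:
  fixes g :: "'a::metric_space \<Rightarrow> real"
  assumes "continuous_on T g" "closedin (top_of_set S) T"
  obtains f where "continuous_on S f" "\<And>y. y \<in> T \<Longrightarrow> f y = g y"
proof -
  have "T \<subseteq> S"
    using assms(2) closedin_imp_subset by blast
  then have "continuous_map (subtopology (top_of_set S) T) euclideanreal g"
    using assms(1) by (simp add: subtopology_subtopology Int_absorb1)
  moreover have "normal_space (top_of_set S)"
    by (intro metrizable_imp_normal_space metrizable_space_subtopology metrizable_space_euclidean)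
  ultimately obtain f
    where "continuous_map (top_of_set S) euclideanreal f" "\<And>y. y \<in> T \<Longrightarrow> f y = g y"
    using Tietze_extension_realinterval[OF _ assms(2), of UNIV g] by auto
  then show ?thesis
    using that by auto
qed

lemma continuous_unbounded_along_sequence_without_cluster_point:
  fixes x :: "nat \<Rightarrow> 'a::metric_space"
  assumes "range x \<subseteq> S" "\<And>p. \<not> cluster_point_in S x p"
  obtains f :: "'a \<Rightarrow> real" where "continuous_on S f" "\<And>n. real n \<le> f (x n)"
proof -
  have no_limpt: "\<not> p islimpt range x" if "p \<in> S" for p
    using assms(2) islimpt_range_imp_cluster_point_in that by blast
  have closed: "closedin (top_of_set S) (range x)"
    using assms(1) no_limpt by (auto simp: closedin_limpt)
  have "discrete (range x)"
    using assms(1) no_limpt by (auto intro!: discreteI simp: isolated_in_islimpt_iff)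
  then have "continuous_on (range x) (\<lambda>y. real (Max {n. x n = y}))"
    by (rule continuous_on_discrete)
  then obtain f
    where f: "continuous_on S f" "\<And>y. y \<in> range x \<Longrightarrow> f y = real (Max {n. x n = y})"
    using closed by (rule Tietze_extension_real) auto
  have "real n \<le> f (x n)" for n
    using f(2) finite_fibres_if_no_cluster_point_in[OF assms] by simp
  with f(1) show ?thesis
    using that by blast
qed

lemma not_bounded_image_if_index_le:
  fixes h :: "nat \<Rightarrow> real"
  assumes "infinite N" "\<And>n. real n \<le> h n"
  shows "\<not> bounded (h ` N)"
proof
  assume "bounded (h ` N)"
  then obtain B where B: "\<And>n. n \<in> N \<Longrightarrow> \<bar>h n\<bar> \<le> B"
    by (auto simp: bounded_iff)
  obtain n where "n \<in> N" "n > nat \<lceil>B\<rceil>"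
    using assms(1) unfolding infinite_nat_iff_unbounded by blast
  then show False
    using B[of n] assms(2)[of n] by linarith
qed

lemma continuous_images_if_quasi_complete:
  assumes "cofinally_bourbaki_quasi_complete S" "continuous_on S f"
    "cofinally_bourbaki_quasi_cauchy S x"
  shows "has_cauchy_subseq (f \<circ> x)" "cofinally_cauchy (f \<circ> x)"
    "cofinally_bourbaki_cauchy (f \<circ> x)"
proof -
  obtain p where "cluster_point_in S x p"
    using assms(1,3) unfolding cofinally_bourbaki_quasi_complete_def by blast
  then show "has_cauchy_subseq (f \<circ> x)"
    using has_cauchy_subseq_continuous_image assms(2)
      range_subset_if_cofinally_bourbaki_quasi_cauchy[OF assms(3)] by blast
  then show "cofinally_cauchy (f \<circ> x)"
    by (rule has_cauchy_subseq_imp_cofinally_cauchy)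
  then show "cofinally_bourbaki_cauchy (f \<circ> x)"
    by (rule cofinally_cauchy_imp_cofinally_bourbaki_cauchy)
qed

lemma quasi_complete_if_real_images_cofinally_bourbaki_cauchy:
  assumes "\<And>f :: 'a::metric_space \<Rightarrow> real. \<And>x. continuous_on S f \<Longrightarrow>
    cofinally_bourbaki_quasi_cauchy S x \<Longrightarrow> cofinally_bourbaki_cauchy (f \<circ> x)"
  shows "cofinally_bourbaki_quasi_complete S"
  unfolding cofinally_bourbaki_quasi_complete_def
proof (intro allI impI)
  fix x assume x: "cofinally_bourbaki_quasi_cauchy S x"
  show "\<exists>p. cluster_point_in S x p"
  proof (rule ccontr)
    assume "\<nexists>p. cluster_point_in S x p"
    then obtain f :: "'a \<Rightarrow> real" where f: "continuous_on S f" "\<And>n. real n \<le> f (x n)"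
      using continuous_unbounded_along_sequence_without_cluster_point
        range_subset_if_cofinally_bourbaki_quasi_cauchy[OF x] by blast
    obtain N where "infinite N" "bounded ((f \<circ> x) ` N)"
      using assms[OF f(1) x] by (rule cofinally_bourbaki_cauchy_imp_bounded_on_infinite)
    then show False
      using not_bounded_image_if_index_le f(2) by (metis comp_apply)
  qed
qed

theorem mainTheorem7:
  fixes S :: "'a::metric_space set"
  shows
  "(cofinally_bourbaki_quasi_complete S \<longrightarrow>
      (\<forall>f::'a \<Rightarrow> 'b::metric_space. continuous_on S f \<longrightarrow>
         (\<forall>x. cofinally_bourbaki_quasi_cauchy S x \<longrightarrow> has_cauchy_subseq (f \<circ> x))) \<and>
      (\<forall>f::'a \<Rightarrow> 'b. continuous_on S f \<longrightarrow>
         (\<forall>x. cofinally_bourbaki_quasi_cauchy S x \<longrightarrow> cofinally_cauchy (f \<circ> x))) \<and>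
      (\<forall>f::'a \<Rightarrow> 'b. continuous_on S f \<longrightarrow>
         (\<forall>x. cofinally_bourbaki_quasi_cauchy S x \<longrightarrow> cofinally_bourbaki_cauchy (f \<circ> x))))
   \<and> ((\<forall>f::'a \<Rightarrow> real. continuous_on S f \<longrightarrow>
         (\<forall>x. cofinally_bourbaki_quasi_cauchy S x \<longrightarrow> has_cauchy_subseq (f \<circ> x)))
       \<longrightarrow> cofinally_bourbaki_quasi_complete S)
   \<and> ((\<forall>f::'a \<Rightarrow> real. continuous_on S f \<longrightarrow>
         (\<forall>x. cofinally_bourbaki_quasi_cauchy S x \<longrightarrow> cofinally_cauchy (f \<circ> x)))
       \<longrightarrow> cofinally_bourbaki_quasi_complete S)
   \<and> (cofinally_bourbaki_quasi_complete S \<longleftrightarrow>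
       (\<forall>f::'a \<Rightarrow> real. continuous_on S f \<longrightarrow>
         (\<forall>x. cofinally_bourbaki_quasi_cauchy S x \<longrightarrow> cofinally_bourbaki_cauchy (f \<circ> x))))"
proof -
  have quasi_complete_if: "cofinally_bourbaki_quasi_complete S"
    if "\<forall>f::'a \<Rightarrow> real. continuous_on S f \<longrightarrow>
          (\<forall>x. cofinally_bourbaki_quasi_cauchy S x \<longrightarrow> P (f \<circ> x))"
      and "\<And>y :: nat \<Rightarrow> real. P y \<Longrightarrow> cofinally_bourbaki_cauchy y" for P
    using quasi_complete_if_real_images_cofinally_bourbaki_cauchy that by blast
  show ?thesis
    apply (intro conjI)
    subgoal by (simp add: continuous_images_if_quasi_complete)
    subgoal using quasi_complete_if[of has_cauchy_subseq] has_cauchy_subseq_imp_cofinally_cauchy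
        cofinally_cauchy_imp_cofinally_bourbaki_cauchy by blast
    subgoal using quasi_complete_if[of cofinally_cauchy]
        cofinally_cauchy_imp_cofinally_bourbaki_cauchy by blast
    subgoal using quasi_complete_if[of cofinally_bourbaki_cauchy]
      by (auto simp: continuous_images_if_quasi_complete)
    done
qed

end
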